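(* Let $1\le d<n$, $\underline i=i_1\cdots i_d\in I(d,n)$, and consider root operators $f_{s,h},f_{t,k}$ (all operators below are assumed to be defined, i.e. their indices admissible). (i) If $|h-k|>1$, or $|h-k|=1$ and $|s-t|>1$, then $f_{s,h}f_{t,k}(\underline i)=f_{t,k}f_{s,h}(\underline i)$. (ii) If $|s-t|>1$ or $s=t$, then $f_{s,h}f_{t,h}(\underline i)=0=f_{t,h}f_{s,h}(\underline i)$. (iii) $f_{s,h}f_{s+1,h}(\underline i)=0$, and $f_{s+1,h}f_{s,h}(\underline i)\neq0$ if and only if $i_h=s$ and either $h=d$ or $i_{h+1}>s+2$. (iv) $f_{s+1,h+1}f_{s,h}(\underline i)=f_{s,h+1}f_{s+1,h}(\underline i)=f_{s+1,h}f_{s,h+1}(\underline i)=0$, and $f_{s,h}f_{s+1,h+1}(\underline i)\neq0$ if and only if $i_h=s$, $i_{h+1}=s+1$ and either $h+1=d$ or $i_{h+2}>s+2$.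
   Context: $I(d,n)$ is the set of $d$-element subsets of $\{1,\dots,n\}$ written as increasing sequences. For $1\le h\le d$ and $h\le s<n-d+h$, the root operator $f_{s,h}$ on $I(d,n)\sqcup\{0\}$ ($0$ a formal symbol) is defined by $f_{s,h}(0)=0$ and $f_{s,h}(i_1\cdots i_d)=i_1\cdots i_{h-1}(s+1)i_{h+1}\cdots i_d$ if $i_h=s$ and either $h=d$ or $i_{h+1}\ge s+2$, and $0$ otherwise. *)

theory Defs
  imports Main
begin

text \<open>I(d,n): d-element subsets of {1..n} as strictly increasing lists of length d.\<close>
definition Idn :: "nat \<Rightarrow> nat \<Rightarrow> nat list set" where
  "Idn d n = {xs. length xs = d \<and> sorted_wrt (<) xs \<and> set xs \<subseteq> {1..n}}"

definition entry :: "nat list \<Rightarrow> nat \<Rightarrow> nat" where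
  "entry xs h = xs ! (h - 1)"

text \<open>Elements of I(d,n) disjoint-union {0} are modelled as nat list option,
  with None playing the role of the formal symbol 0.\<close>
fun root_op :: "nat \<Rightarrow> nat \<Rightarrow> nat \<Rightarrow> nat list option \<Rightarrow> nat list option" where
  "root_op d s h None = None"
| "root_op d s h (Some xs) =
     (if entry xs h = s \<and> (h = d \<or> entry xs (h + 1) \<ge> s + 2)
      then Some (xs[h - 1 := s + 1]) else None)"

definition admissible :: "nat \<Rightarrow> nat \<Rightarrow> nat \<Rightarrow> nat \<Rightarrow> bool" where
  "admissible d n s h \<longleftrightarrow> 1 \<le> h \<and> h \<le> d \<and> h \<le> s \<and> s < n - d + h"

end

theory Submission
  imports Defs
begin

text \<open>The operator \<open>f\<^sub>s\<^sub>,\<^sub>h\<close> reads only the entries \<open>i\<^sub>h\<close>, \<open>i\<^sub>h\<^sub>+\<^sub>1\<close> and writes only \<open>i\<^sub>h\<close>.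
  Every relation is therefore a matter of tracking these entries through the two
  applications; sortedness is needed only for operators in adjacent positions,
  where it forces \<open>i\<^sub>h < i\<^sub>h\<^sub>+\<^sub>1\<close>.\<close>

lemma entry_list_update:
  assumes "j < length xs" "1 \<le> k"
  shows "entry (xs[j := v]) k = (if k = j + 1 then v else entry xs k)"
  using assms by (auto simp: entry_def nth_list_update)

lemma entry_less_entry_Suc:
  assumes "sorted_wrt (<) xs" "1 \<le> h" "h < length xs"
  shows "entry xs h < entry xs (h + 1)"
  using assms by (simp add: entry_def sorted_wrt_nth_less)

lemma root_op_commute_distant:
  assumes "length xs = d" "1 \<le> h" "h + 1 < k" "k \<le> d"
  shows "root_op d s h (root_op d t k (Some xs)) = root_op d t k (root_op d s h (Some xs))"
  using assms by (auto simp: entry_list_update list_update_swap)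

lemma root_op_commute_adjacent:
  assumes "length xs = d" "sorted_wrt (<) xs" "1 \<le> h" "h < d" "t \<noteq> s + 1"
  shows "root_op d s h (root_op d t (h + 1) (Some xs)) =
    root_op d t (h + 1) (root_op d s h (Some xs))"
  using assms entry_less_entry_Suc[OF assms(2,3)]
  by (auto simp: entry_list_update list_update_swap)

lemma root_op_commute:
  assumes "length xs = d" "sorted_wrt (<) xs" "1 \<le> h" "h \<le> d" "1 \<le> k" "k \<le> d"
    and "\<bar>int h - int k\<bar> > 1 \<or> (\<bar>int h - int k\<bar> = 1 \<and> \<bar>int s - int t\<bar> > 1)"
  shows "root_op d s h (root_op d t k (Some xs)) = root_op d t k (root_op d s h (Some xs))"
proof -
  consider "h + 1 < k" | "k + 1 < h" | "k = h + 1" "t \<noteq> s + 1" | "h = k + 1" "s \<noteq> t + 1"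
    using assms(7) by linarith
  then show ?thesis
  proof cases
    case 1
    with assms show ?thesis by (intro root_op_commute_distant) auto
  next
    case 2
    with assms show ?thesis by (intro root_op_commute_distant[symmetric]) auto
  next
    case 3
    with assms root_op_commute_adjacent[of xs d h t s] show ?thesis
      by (simp del: root_op.simps)
  next
    case 4
    with assms root_op_commute_adjacent[of xs d k s t] show ?thesis
      by (simp del: root_op.simps)
  qed
qed

lemma root_op_twice_same_position_None:
  assumes "length xs = d" "1 \<le> h" "h \<le> d" "s \<noteq> t + 1"
  shows "root_op d s h (root_op d t h (Some xs)) = None"
  using assms by (simp add: entry_list_update)

lemma root_op_Suc_after_root_op_defined_iff:
  assumes "length xs = d" "1 \<le> h" "h \<le> d"
  shows "root_op d (s + 1) h (root_op d s h (Some xs)) \<noteq> None \<longleftrightarrow>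
    entry xs h = s \<and> (h = d \<or> entry xs (h + 1) > s + 2)"
  using assms by (auto simp: entry_list_update)

lemma root_op_next_after_root_op_None:
  assumes "length xs = d" "1 \<le> h" "h < d" "t \<le> s + 1"
  shows "root_op d t (h + 1) (root_op d s h (Some xs)) = None"
  using assms by (simp add: entry_list_update)

lemma root_op_after_root_op_next_None:
  assumes "length xs = d" "1 \<le> h" "h < d" "t \<le> s"
  shows "root_op d s h (root_op d t (h + 1) (Some xs)) = None"
  using assms by (simp add: entry_list_update)

lemma root_op_after_root_op_next_Suc_defined_iff:
  assumes "length xs = d" "1 \<le> h" "h < d"
  shows "root_op d s h (root_op d (s + 1) (h + 1) (Some xs)) \<noteq> None \<longleftrightarrow>
    entry xs h = s \<and> entry xs (h + 1) = s + 1 \<and> (h + 1 = d \<or> entry xs (h + 2) > s + 2)"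
  using assms by (auto simp: entry_list_update)

theorem proposition2p13:
  fixes d n :: nat and i :: "nat list"
  assumes "1 \<le> d" and "d < n" and "i \<in> Idn d n"
  shows
   "(\<forall>s h t k. admissible d n s h \<and> admissible d n t k \<and>
        (\<bar>int h - int k\<bar> > 1 \<or> (\<bar>int h - int k\<bar> = 1 \<and> \<bar>int s - int t\<bar> > 1)) \<longrightarrow>
        root_op d s h (root_op d t k (Some i)) = root_op d t k (root_op d s h (Some i)))
  \<and> (\<forall>s t h. admissible d n s h \<and> admissible d n t h \<and>
        (\<bar>int s - int t\<bar> > 1 \<or> s = t) \<longrightarrow>
        root_op d s h (root_op d t h (Some i)) = None \<and>
        root_op d t h (root_op d s h (Some i)) = None)
  \<and> (\<forall>s h. admissible d n s h \<and> admissible d n (s + 1) h \<longrightarrow>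
        root_op d s h (root_op d (s + 1) h (Some i)) = None \<and>
        (root_op d (s + 1) h (root_op d s h (Some i)) \<noteq> None \<longleftrightarrow>
           entry i h = s \<and> (h = d \<or> entry i (h + 1) > s + 2)))
  \<and> (\<forall>s h. admissible d n (s + 1) (h + 1) \<and> admissible d n s h \<longrightarrow>
        root_op d (s + 1) (h + 1) (root_op d s h (Some i)) = None)
  \<and> (\<forall>s h. admissible d n s (h + 1) \<and> admissible d n (s + 1) h \<longrightarrow>
        root_op d s (h + 1) (root_op d (s + 1) h (Some i)) = None \<and>
        root_op d (s + 1) h (root_op d s (h + 1) (Some i)) = None)
  \<and> (\<forall>s h. admissible d n s h \<and> admissible d n (s + 1) (h + 1) \<longrightarrow>
        (root_op d s h (root_op d (s + 1) (h + 1) (Some i)) \<noteq> None \<longleftrightarrow>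
           entry i h = s \<and> entry i (h + 1) = s + 1 \<and>
           (h + 1 = d \<or> entry i (h + 2) > s + 2)))"
proof -
  have len: "length i = d" and sorted: "sorted_wrt (<) i"
    using assms(3) by (auto simp: Idn_def)
  show ?thesis
    unfolding admissible_def
    using root_op_commute[OF len sorted]
      root_op_twice_same_position_None[OF len] root_op_Suc_after_root_op_defined_iff[OF len]
      root_op_next_after_root_op_None[OF len] root_op_after_root_op_next_None[OF len]
      root_op_after_root_op_next_Suc_defined_iff[OF len]
    by (auto simp del: root_op.simps)
qed

end
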